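(* Let $\lambda/\mu$ be an r-shape and $\mathbf a,\mathbf b$ column flags for it, with conjugate flags $\mathbf a',\mathbf b'$. Then $$\mathsf S^{\mathbf a,\mathbf b}_{\lambda/\mu}(\mathbf y/\mathbf z)=\overline{\mathsf S}^{\mathbf a',\mathbf b'}_{\lambda'/\mu'}(\overline{\mathbf z}/\overline{\mathbf y}),$$ where $\lambda'/\mu'$ is the conjugate r-shape and $\overline{\mathbf y}=(-y_i)_{i\in\mathbb Z}$, $\overline{\mathbf z}=(-z_i)_{i\in\mathbb Z}$.
   Context: Young diagrams in English notation; $\lambda'$ conjugate partition. An r-shape is $(\lambda/\mu,r)$ with shifted contents $c(i,j)=j-i+r-1+\lambda'_1$. The conjugate r-shape of $(\lambda/\mu,r)$ is the transposed diagram $\lambda'/\mu'$ with root content $-r'$, where $r'$ is the content of the top-right cell of $\lambda/\mu$ (so each cell's content is negated under transposition). Column flags for $\lambda/\mu$: for $n\ge\lambda_1$, $\mathbf a,\mathbf b\in\mathbb Z^n$ with $a_i-a_{i+1}\le\mu'_i-\mu'_{i+1}+1$, $b_i-b_{i+1}\le\lambda'_i-\lambda'_{i+1}+1$ whenever $\mu'_i<\lambda'_{i+1}$. Conjugate flags: $a'_i=a_i+c(\gamma_i)$, $b'_i=b_i+c(\delta_i)$, $\gamma_i,\delta_i$ top and bottom cells of column $i$ of $\lambda/\mu$; these are row flags for $\lambda'/\mu'$. Row flags for an r-shape $\kappa/\nu$: vectors $\mathbf a',\mathbf b'$ with $a'_i\le a'_{i+1}$, $b'_i\le b'_{i+1}$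 whenever $\nu_i<\kappa_{i+1}$. $\mathbf y_{a,b}=(y_a,\ldots,y_b)$ (empty if $a>b$). $e_n(\mathbf x/\mathbf w)=\sum_{i=0}^n(-1)^{n-i}e_i(\mathbf x)h_{n-i}(\mathbf w)$, $h_n(\mathbf x/\mathbf w)=\sum_{i=0}^n(-1)^{n-i}h_i(\mathbf x)e_{n-i}(\mathbf w)$ ($e_0=h_0=1$, zero for negative index). Column flagged function: $\mathsf S^{\mathbf a,\mathbf b}_{\lambda/\mu}(\mathbf y/\mathbf z)=\det[e_{\lambda'_i-i-\mu'_j+j}(\mathbf y_{a_j,b_i}/\mathbf z_{a'_j,b'_i})]_{1\le i,j\le n}$. Row flagged function for an r-shape $\kappa/\nu$ with row flags $\mathbf a',\mathbf b'$: $\overline{\mathsf S}^{\mathbf a',\mathbf b'}_{\kappa/\nu}(\mathbf y/\mathbf z)=\det[h_{\kappa_i-\nu_j-i+j}(\mathbf y_{a'_j,b'_i}/\mathbf z_{a_j,b_i})]_{1\le i,j\le n}$ for $n\ge\ell(\kappa)$, where $a_j=a'_j+c(\zeta_j)$, $b_i=b'_i+c(\xi_i)$ with $\zeta_j,\xi_i$ the leftmost cell of row $j$ and rightmost cell of row $i$ of $\kappa/\nu$ (i.e. $\mathbf a,\mathbf b$ are the column flags of the conjugate shape whose conjugates are $\mathbf a',\mathbf b'$). *)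

theory Defs
  imports Main "Jordan_Normal_Form.Determinant"
begin

text \<open>Partitions are functions nat => nat indexed from 1 (index 0 is ignored),
  weakly decreasing and eventually zero.\<close>
definition is_partition :: "(nat \<Rightarrow> nat) \<Rightarrow> bool" where
  "is_partition lam \<longleftrightarrow> (\<forall>i\<ge>1. lam (Suc i) \<le> lam i) \<and> (\<exists>N. \<forall>i>N. lam i = 0)"

definition conj_part :: "(nat \<Rightarrow> nat) \<Rightarrow> nat \<Rightarrow> nat" where
  "conj_part lam j = card {i. 1 \<le> i \<and> j \<le> lam i}"

definition skew_shape :: "(nat \<Rightarrow> nat) \<Rightarrow> (nat \<Rightarrow> nat) \<Rightarrow> bool" where
  "skew_shape lam mu \<longleftrightarrow> is_partition lam \<and> is_partition mu \<and> (\<forall>i\<ge>1. mu i \<le> lam i)"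

definition content :: "(nat \<Rightarrow> nat) \<Rightarrow> int \<Rightarrow> nat \<Rightarrow> nat \<Rightarrow> int" where
  "content lam r i j = int j - int i + r - 1 + int (conj_part lam 1)"

definition conj_root :: "(nat \<Rightarrow> nat) \<Rightarrow> int \<Rightarrow> int" where
  "conj_root lam r = - content lam r 1 (lam 1)"

definition column_flags :: "(nat \<Rightarrow> nat) \<Rightarrow> (nat \<Rightarrow> nat) \<Rightarrow> nat \<Rightarrow> (nat \<Rightarrow> int) \<Rightarrow> (nat \<Rightarrow> int) \<Rightarrow> bool" where
  "column_flags lam mu n a b \<longleftrightarrow> lam 1 \<le> n \<and>
     (\<forall>i. 1 \<le> i \<and> i < n \<and> conj_part mu i < conj_part lam (Suc i) \<longrightarrow>
        a i - a (Suc i) \<le> int (conj_part mu i) - int (conj_part mu (Suc i)) + 1 \<and>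
        b i - b (Suc i) \<le> int (conj_part lam i) - int (conj_part lam (Suc i)) + 1)"

text \<open>Conjugate flags: a'_i = a_i + c(gamma_i), b'_i = b_i + c(delta_i), with gamma_i = (mu'_i+1, i)
  the top cell and delta_i = (lam'_i, i) the bottom cell of column i.\<close>
definition conj_flag_a :: "(nat \<Rightarrow> nat) \<Rightarrow> (nat \<Rightarrow> nat) \<Rightarrow> int \<Rightarrow> (nat \<Rightarrow> int) \<Rightarrow> nat \<Rightarrow> int" where
  "conj_flag_a lam mu r a i = a i + content lam r (conj_part mu i + 1) i"

definition conj_flag_b :: "(nat \<Rightarrow> nat) \<Rightarrow> (nat \<Rightarrow> nat) \<Rightarrow> int \<Rightarrow> (nat \<Rightarrow> int) \<Rightarrow> nat \<Rightarrow> int" where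
  "conj_flag_b lam mu r b i = b i + content lam r (conj_part lam i) i"

definition esym :: "nat \<Rightarrow> (int \<Rightarrow> 'a::comm_ring_1) \<Rightarrow> int set \<Rightarrow> 'a" where
  "esym k x A = (\<Sum>S | S \<subseteq> A \<and> card S = k. \<Prod>i\<in>S. x i)"

definition hsym :: "nat \<Rightarrow> (int \<Rightarrow> 'a::comm_ring_1) \<Rightarrow> int set \<Rightarrow> 'a" where
  "hsym k x A = (\<Sum>m | (\<forall>i. i \<notin> A \<longrightarrow> m i = 0) \<and> (\<Sum>i\<in>A. m i) = k. \<Prod>i\<in>A. x i ^ m i)"

definition super_e :: "int \<Rightarrow> (int \<Rightarrow> 'a::comm_ring_1) \<Rightarrow> int set \<Rightarrow> (int \<Rightarrow> 'a) \<Rightarrow> int set \<Rightarrow> 'a" where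
  "super_e k x A w B = (if k < 0 then 0 else
     (\<Sum>i\<le>nat k. (-1) ^ (nat k - i) * esym i x A * hsym (nat k - i) w B))"

definition super_h :: "int \<Rightarrow> (int \<Rightarrow> 'a::comm_ring_1) \<Rightarrow> int set \<Rightarrow> (int \<Rightarrow> 'a) \<Rightarrow> int set \<Rightarrow> 'a" where
  "super_h k x A w B = (if k < 0 then 0 else
     (\<Sum>i\<le>nat k. (-1) ^ (nat k - i) * hsym i x A * esym (nat k - i) w B))"

text \<open>Matrix entries (i,j) are 0-indexed, so they refer to i+1, j+1.\<close>
definition col_S :: "(nat \<Rightarrow> nat) \<Rightarrow> (nat \<Rightarrow> nat) \<Rightarrow> int \<Rightarrow> nat \<Rightarrow> (nat \<Rightarrow> int) \<Rightarrow> (nat \<Rightarrow> int)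
    \<Rightarrow> (int \<Rightarrow> 'a::comm_ring_1) \<Rightarrow> (int \<Rightarrow> 'a) \<Rightarrow> 'a" where
  "col_S lam mu r n a b y z = det (mat n n (\<lambda>(i, j).
     super_e (int (conj_part lam (Suc i)) - int (Suc i) - int (conj_part mu (Suc j)) + int (Suc j))
       y {a (Suc j) .. b (Suc i)}
       z {conj_flag_a lam mu r a (Suc j) .. conj_flag_b lam mu r b (Suc i)}))"

text \<open>Row flagged function for the r-shape (kap/nu, s) with row flags a', b';
  a_j = a'_j + c(zeta_j), b_i = b'_i + c(xi_i), zeta_j = (j, nu_j + 1) leftmost cell of row j,
  xi_i = (i, kap_i) rightmost cell of row i.\<close>
definition row_S :: "(nat \<Rightarrow> nat) \<Rightarrow> (nat \<Rightarrow> nat) \<Rightarrow> int \<Rightarrow> nat \<Rightarrow> (nat \<Rightarrow> int) \<Rightarrow> (nat \<Rightarrow> int)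
    \<Rightarrow> (int \<Rightarrow> 'a::comm_ring_1) \<Rightarrow> (int \<Rightarrow> 'a) \<Rightarrow> 'a" where
  "row_S kap nu s n a' b' y z = det (mat n n (\<lambda>(i, j).
     super_h (int (kap (Suc i)) - int (nu (Suc j)) - int (Suc i) + int (Suc j))
       y {a' (Suc j) .. b' (Suc i)}
       z {a' (Suc j) + content kap s (Suc j) (nu (Suc j) + 1) ..
          b' (Suc i) + content kap s (Suc i) (kap (Suc i))}))"

end

theory Submission
  imports Defs
begin

text \<open>The identity holds entry by entry, so the flag conditions are not needed. Negating all
  variables turns e_k(x/w) into h_k(-w/-x), and the degrees of the two determinants agree.
  The variable ranges agree because transposing the diagram negates every shifted content: adding
  the conjugate content of the end cell of a row of \<lambda>'/\<mu>' to a conjugate flag recovers the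
  original column flag.\<close>

lemma esym_uminus: "esym k (\<lambda>i. - x i) A = (-1) ^ k * esym k x A"
  unfolding esym_def sum_distrib_left by (rule sum.cong) (auto simp: prod_uminus)

lemma hsym_uminus: "hsym k (\<lambda>i. - x i) A = (-1) ^ k * hsym k x A"
  unfolding hsym_def sum_distrib_left
proof (rule sum.cong[OF refl])
  fix m assume "m \<in> {m. (\<forall>i. i \<notin> A \<longrightarrow> m i = 0) \<and> sum m A = k}"
  then have "(\<Prod>i\<in>A. (-1::'a) ^ m i) = (-1) ^ k"
    by (simp add: power_sum[symmetric])
  then show "(\<Prod>i\<in>A. (- x i) ^ m i) = (-1) ^ k * (\<Prod>i\<in>A. x i ^ m i)"
    by (simp add: power_minus' prod.distrib)
qed

lemma super_e_eq_super_h_uminus: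
  "super_e k x A w B = super_h k (\<lambda>i. - w i) B (\<lambda>i. - x i) A"
proof (cases "k < 0")
  case True
  then show ?thesis by (simp add: super_e_def super_h_def)
next
  case False
  define K where "K = nat k"
  have "super_h k (\<lambda>i. - w i) B (\<lambda>i. - x i) A =
      (\<Sum>i\<le>K. (-1) ^ (K - i) * ((-1) ^ i * hsym i w B) * ((-1) ^ (K - i) * esym (K - i) x A))"
    using False by (simp add: super_h_def K_def hsym_uminus esym_uminus)
  also have "\<dots> = (\<Sum>i\<le>K. (-1) ^ i * hsym i w B * esym (K - i) x A)"
  proof (rule sum.cong[OF refl])
    fix i
    have "(-1::'a) ^ (K - i) * (-1) ^ (K - i) = 1"
      by (simp add: power_add[symmetric])
    then show "(-1) ^ (K - i) * ((-1) ^ i * hsym i w B) * ((-1) ^ (K - i) * esym (K - i) x A)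
        = (-1) ^ i * hsym i w B * esym (K - i) x A"
      by (simp add: algebra_simps)
  qed
  also have "\<dots> = (\<Sum>j\<le>K. (-1) ^ (K - j) * esym j x A * hsym (K - j) w B)"
    by (rule sum.reindex_bij_witness[of _ "\<lambda>j. K - j" "\<lambda>j. K - j"]) (auto simp: mult_ac)
  finally show ?thesis
    using False by (simp add: super_e_def K_def)
qed

lemma is_partition_antimono:
  assumes "is_partition lam" "1 \<le> i" "i \<le> j"
  shows "lam j \<le> lam i"
  using assms(3)
proof (induction j rule: dec_induct)
  case (step j)
  then have "lam (Suc j) \<le> lam j"
    using assms(1,2) unfolding is_partition_def by simp
  with step.IH show ?case by simp
qed simp

lemma finite_rows_ge:
  assumes "is_partition lam" "1 \<le> k"
  shows "finite {i. 1 \<le> i \<and> k \<le> lam i}"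
proof -
  obtain N where "\<forall>i>N. lam i = 0"
    using assms(1) unfolding is_partition_def by blast
  then have "{i. 1 \<le> i \<and> k \<le> lam i} \<subseteq> {..N}"
    using assms(2) by (auto simp: not_le[symmetric])
  then show ?thesis by (rule finite_subset) simp
qed

lemma le_conj_part_iff:
  assumes "is_partition lam" "1 \<le> i" "1 \<le> k"
  shows "i \<le> conj_part lam k \<longleftrightarrow> k \<le> lam i"
proof
  let ?S = "{j. 1 \<le> j \<and> k \<le> lam j}"
  assume "i \<le> conj_part lam k"
  have "\<not> ?S \<subseteq> {1..<i}"
  proof
    assume "?S \<subseteq> {1..<i}"
    then have "card ?S \<le> i - 1"
      using card_mono[OF finite_atLeastLessThan] by fastforce
    with \<open>i \<le> conj_part lam k\<close> assms(2) show False
      by (simp add: conj_part_def)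
  qed
  then obtain j where "j \<in> ?S" "i \<le> j"
    by (auto simp: subset_iff)
  then show "k \<le> lam i"
    using is_partition_antimono[OF assms(1,2)] le_trans by blast
next
  let ?S = "{j. 1 \<le> j \<and> k \<le> lam j}"
  assume "k \<le> lam i"
  have "{1..i} \<subseteq> ?S"
  proof
    fix j assume "j \<in> {1..i}"
    with is_partition_antimono[OF assms(1)] have "lam i \<le> lam j" by simp
    with \<open>k \<le> lam i\<close> \<open>j \<in> {1..i}\<close> show "j \<in> ?S" by simp
  qed
  then have "card {1..i} \<le> card ?S"
    by (rule card_mono[OF finite_rows_ge[OF assms(1,3)]])
  then show "i \<le> conj_part lam k"
    by (simp add: conj_part_def)
qed

lemma conj_part_conj_part:
  assumes "is_partition lam" "1 \<le> i"
  shows "conj_part (conj_part lam) i = lam i"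
proof -
  have "{k. 1 \<le> k \<and> i \<le> conj_part lam k} = {1..lam i}"
    using le_conj_part_iff[OF assms(1,2)] by auto
  then show ?thesis by (simp add: conj_part_def)
qed

lemma content_conj:
  assumes "is_partition lam"
  shows "content (conj_part lam) (conj_root lam r) j i = - content lam r i j"
  using conj_part_conj_part[OF assms, of 1]
  by (simp add: content_def conj_root_def)

theorem proposition3p3:
  fixes lam mu :: "nat \<Rightarrow> nat" and r :: int and n :: nat
    and a b :: "nat \<Rightarrow> int" and y z :: "int \<Rightarrow> 'a::comm_ring_1"
  assumes "skew_shape lam mu"
    and "column_flags lam mu n a b"
  shows "col_S lam mu r n a b y z =
         row_S (conj_part lam) (conj_part mu) (conj_root lam r) n
               (conj_flag_a lam mu r a) (conj_flag_b lam mu r b)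
               (\<lambda>i. - z i) (\<lambda>i. - y i)"
proof -
  have "is_partition lam"
    using assms(1) unfolding skew_shape_def by blast
  note content_conj[OF this]
  then have "conj_flag_a lam mu r a j
        + content (conj_part lam) (conj_root lam r) j (conj_part mu j + 1) = a j"
    and "conj_flag_b lam mu r b i
        + content (conj_part lam) (conj_root lam r) i (conj_part lam i) = b i" for i j
    by (simp_all add: conj_flag_a_def conj_flag_b_def)
  then show ?thesis
    unfolding col_S_def row_S_def
    by (intro arg_cong[where f = det] arg_cong[where f = "mat n n"] ext)
       (auto simp: super_e_eq_super_h_uminus algebra_simps)
qed

end
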